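(* Let $(\mathcal X,\rho)$ be a non-empty Polish metric space with Borel $\sigma$-field $\mathfrak B(\mathcal X)$, and let $\mathcal Y\in\mathfrak B(\mathcal X)$ satisfy $$c_{x,0}\,s^{-\gamma}\le \log \mathcal N_{\mathcal X}(s,\mathcal Y,\rho)\le c_{x,1}\,s^{-\gamma}\qquad\text{for all } s\in(0,s_0),$$ for constants $s_0>0$, $0<c_{x,0}<c_{x,1}$, $\gamma>0$. Fix $C>0$, $\beta\in(0,1]$, $\kappa>0$. Let $\mathcal P_{C,\beta,\kappa}$ be the set of pairs $(P_X,P_Y)$ of probability measures on $\mathfrak B(\mathcal X)$ with $P_X(\mathcal Y)=P_Y(\mathcal Y)=1$, $\operatorname{TV}(P_X,P_Y)\ge\kappa$, and such that there is a Borel set $\mathcal Y_0\subseteq\mathcal Y$ with $(P_X+P_Y)(\mathcal Y_0)=2$ and $|p_X(y)-p_X(z)|\le C\rho(y,z)^\beta$ for all $y,z\in\mathcal Y_0$, where $p_X=\mathrm dP_X/\mathrm d(P_X+P_Y)$. Supervised classification model: the training sample $(Z_1,W_1),\dots,(Z_n,W_n)$ is i.i.d., with $W_j\in\{0,1\}$, $P[W_1=1]=w$ for a fixed $w\in(0,1)$, and conditionally on $W_j=0$ (resp. $W_j=1$) $Z_j$ has law $P_X$ (resp. $P_Y$); a further observation $Z$, independent of the training sample, has law $P_X$ or $P_Y$. Define, with $K=1_{[0,1)}$ and $h=\{d\log n\}^{-1/\gamma}$, where $d\in(0,\eta\,c_{x,1}^{-1}4^{-\gamma})$ for some $\eta\in(0,1/2)$,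 $$\hat p_X(z)=\frac{\sum_{j=1}^n(1-W_j)K(\rho(z,Z_j)/h)}{\sum_{j=1}^n(1-W_j)},\qquad \hat p_Y(z)=\frac{\sum_{j=1}^nW_jK(\rho(z,Z_j)/h)}{\sum_{j=1}^nW_j}$$ when $\sum_j(1-W_j)\in(0,n)$, and otherwise $\hat p_X(z)=0$ or $\hat p_Y(z)=0$ respectively by convention (for the group with empty denominator); and let $\varphi=0$ if $\hat p_X(Z)\ge\hat p_Y(Z)$, $\varphi=1$ otherwise. The excess risk is $$\mathcal E_n(\varphi)=\sup_{(P_X,P_Y)\in\mathcal P_{C,\beta,\kappa}}\big(P_{X,Y,X}[\varphi=1]+P_{X,Y,Y}[\varphi=0]-1+\operatorname{TV}(P_X,P_Y)\big),$$ where $P_{X,Y,X}$ and $P_{X,Y,Y}$ denote the probability when $Z$ has law $P_X$, respectively $P_Y$. Then $$\mathcal E_n(\varphi)=\mathcal O\big((\log n)^{-\beta/\gamma}\big)\quad(n\to\infty).$$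
   Context: $\mathcal N_{\mathcal X}(\delta,\mathcal Y,\rho)$ denotes the minimal number of open $\rho$-balls in $\mathcal X$ of radius $\delta$ whose union contains $\mathcal Y$. $\operatorname{TV}(P,Q)=\sup_{A\in\mathfrak B(\mathcal X)}|P(A)-Q(A)|$. *)

theory Defs
  imports "HOL-Probability.Probability"
begin

(* If no finite cover exists the
   value is Inf {} = 0 (never relevant below, since the hypothesis log N >= c s^-gamma > 0
   forces a finite cover). *)
definition covering_number :: "real \<Rightarrow> 'a::metric_space set \<Rightarrow> nat" where
  "covering_number \<delta> Y =
     Inf {card C | C. finite C \<and> Y \<subseteq> (\<Union>c\<in>C. ball c \<delta>)}"

definition TV :: "'a::topological_space measure \<Rightarrow> 'a measure \<Rightarrow> real" where
  "TV P Q = (SUP A\<in>sets borel. \<bar>measure P A - measure Q A\<bar>)"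

definition sum_meas :: "'a measure \<Rightarrow> 'a measure \<Rightarrow> 'a measure" where
  "sum_meas P Q = measure_of (space P) (sets P) (\<lambda>A. emeasure P A + emeasure Q A)"

definition model_class ::
  "'a::polish_space set \<Rightarrow> real \<Rightarrow> real \<Rightarrow> real \<Rightarrow> ('a measure \<times> 'a measure) set" where
  "model_class Y C \<beta> \<kappa> = {(PX, PY).
     prob_space PX \<and> sets PX = sets borel \<and> prob_space PY \<and> sets PY = sets borel \<and>
     emeasure PX Y = 1 \<and> emeasure PY Y = 1 \<and> TV PX PY \<ge> \<kappa> \<and>
     (\<exists>Y0 p. Y0 \<in> sets borel \<and> Y0 \<subseteq> Y \<and>
        emeasure (sum_meas PX PY) Y0 = 2 \<and>
        p \<in> borel_measurable borel \<and> (\<forall>x. 0 \<le> p x) \<and>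
        density (sum_meas PX PY) (\<lambda>x. ennreal (p x)) = PX \<and>
        (\<forall>y\<in>Y0. \<forall>z\<in>Y0. \<bar>p y - p z\<bar> \<le> C * dist y z powr \<beta>))}"

(* law of one training pair (Z_j, W_j): W_j ~ Bernoulli(w), Z_j | W_j=0 ~ PX, Z_j | W_j=1 ~ PY
   (W_j = 1 is encoded as True) *)
definition sample_law :: "real \<Rightarrow> 'a::topological_space measure \<Rightarrow> 'a measure \<Rightarrow> ('a \<times> bool) measure" where
  "sample_law w PX PY =
     measure_pmf (bernoulli_pmf w) \<bind>
       (\<lambda>b. distr (if b then PY else PX) (borel \<Otimes>\<^sub>M count_space UNIV) (\<lambda>z. (z, b)))"

definition K :: "real \<Rightarrow> real" where
  "K t = indicator {0..<1} t"

definition pX_hat :: "nat \<Rightarrow> real \<Rightarrow> (nat \<Rightarrow> 'a::metric_space \<times> bool) \<Rightarrow> 'a \<Rightarrow> real" where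
  "pX_hat n h s z =
     (let m = (\<Sum>j<n. if snd (s j) then 0 else 1::real) in
      if m = 0 then 0
      else (\<Sum>j<n. (if snd (s j) then 0 else 1) * K (dist z (fst (s j)) / h)) / m)"

definition pY_hat :: "nat \<Rightarrow> real \<Rightarrow> (nat \<Rightarrow> 'a::metric_space \<times> bool) \<Rightarrow> 'a \<Rightarrow> real" where
  "pY_hat n h s z =
     (let m = (\<Sum>j<n. if snd (s j) then 1 else 0::real) in
      if m = 0 then 0
      else (\<Sum>j<n. (if snd (s j) then 1 else 0) * K (dist z (fst (s j)) / h)) / m)"

(* classifier phi; True means phi = 1 *)
definition phi :: "nat \<Rightarrow> real \<Rightarrow> (nat \<Rightarrow> 'a::metric_space \<times> bool) \<Rightarrow> 'a \<Rightarrow> bool" where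
  "phi n h s z = (\<not> (pX_hat n h s z \<ge> pY_hat n h s z))"

definition bandwidth :: "real \<Rightarrow> real \<Rightarrow> nat \<Rightarrow> real" where
  "bandwidth d \<gamma> n = (d * ln (real n)) powr (-1 / \<gamma>)"

definition joint_law ::
  "nat \<Rightarrow> real \<Rightarrow> 'a::topological_space measure \<Rightarrow> 'a measure \<Rightarrow> 'a measure
     \<Rightarrow> ((nat \<Rightarrow> 'a \<times> bool) \<times> 'a) measure" where
  "joint_law n w PX PY PZ = (\<Pi>\<^sub>M j\<in>{..<n}. sample_law w PX PY) \<Otimes>\<^sub>M PZ"

definition excess_risk :: "real \<Rightarrow> real \<Rightarrow> real \<Rightarrow> nat \<Rightarrow> 'a::metric_space measure \<Rightarrow> 'a measure \<Rightarrow> real" where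
  "excess_risk w d \<gamma> n PX PY =
     (let h = bandwidth d \<gamma> n in
       measure (joint_law n w PX PY PX) {(s, z) \<in> space (joint_law n w PX PY PX). phi n h s z}
     + measure (joint_law n w PX PY PY) {(s, z) \<in> space (joint_law n w PX PY PY). \<not> phi n h s z}
     - 1 + TV PX PY)"

end

theory Submission
  imports Defs "HOL-Real_Asymp.Real_Asymp"
begin

(*
  Write mu = P_X + P_Y and p = dP_X/dmu.  Averaged over the test point, the excess risk is at most
  the integral of |2p - 1| times the probability that phi decides wrongly at z.  Cover Y by
  N = N(h/2) balls of radius h/2.  Balls of mu-mass below tau contribute at most 3 N tau.  At a point
  z of a heavier ball, either |2p(z) - 1| <= 4 C h^beta, or the Hoelder condition forces
  |P_X(B(z,h)) - P_Y(B(z,h))| >= 2 C h^beta tau, and Hoeffding's inequality for the two class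
  frequencies of B(z,h) makes a wrong decision exponentially unlikely in n.  The entropy bound gives
  N <= n^alpha with alpha = c_{x,1} 2^gamma d < 1/2, and with tau = n^(-theta), alpha < theta < 1/2,
  every term except 8 C h^beta = O((log n)^(-beta/gamma)) decays polynomially.
*)

section \<open>Sums of measures\<close>

lemma
  assumes "sets Q = sets P"
  shows sets_sum_meas: "sets (sum_meas P Q) = sets P"
    and space_sum_meas: "space (sum_meas P Q) = space P"
  unfolding sum_meas_def by (simp_all add: sets.sets_measure_of_eq sets.space_measure_of_eq)

lemma emeasure_sum_meas:
  assumes Q: "sets Q = sets P" and A: "A \<in> sets P"
  shows "emeasure (sum_meas P Q) A = emeasure P A + emeasure Q A"
  unfolding sum_meas_def
proof (rule emeasure_measure_of_sigma[OF sets.sigma_algebra_axioms _ _ A])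
  show "countably_additive (sets P) (\<lambda>A. emeasure P A + emeasure Q A)"
    unfolding countably_additive_def using Q
    by (auto simp: suminf_add[symmetric] suminf_emeasure)
qed (simp add: positive_def)

lemma nn_integral_sum_meas:
  assumes Q: "sets Q = sets P" and f: "f \<in> borel_measurable P"
  shows "(\<integral>\<^sup>+x. f x \<partial>sum_meas P Q) = (\<integral>\<^sup>+x. f x \<partial>P) + (\<integral>\<^sup>+x. f x \<partial>Q)"
  using f
proof (induction rule: borel_measurable_induct)
  case (cong f g)
  have "space (sum_meas P Q) = space P" "space Q = space P"
    using Q space_sum_meas sets_eq_imp_space_eq by blast+
  with cong show ?case by (metis nn_integral_cong)
next
  case (set A)
  then show ?case
    using Q by (simp add: sets_sum_meas emeasure_sum_meas nn_integral_indicator)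
next
  case (mult u c)
  then show ?case
    using Q by (simp add: nn_integral_cmult distrib_left sets_sum_meas cong: measurable_cong_sets)
next
  case (add u v)
  then show ?case
    using Q by (simp add: nn_integral_add sets_sum_meas add_ac cong: measurable_cong_sets)
next
  case (seq U)
  have U: "\<And>i. U i \<in> borel_measurable (sum_meas P Q)" "\<And>i. U i \<in> borel_measurable Q"
    using seq Q by (simp_all add: sets_sum_meas cong: measurable_cong_sets)
  have mono_int: "incseq (\<lambda>i. \<integral>\<^sup>+x. U i x \<partial>M)" for M
    using seq by (auto simp: incseq_def le_fun_def intro!: nn_integral_mono)
  have "(\<integral>\<^sup>+x. (SUP i. U i x) \<partial>sum_meas P Q) = (SUP i. (\<integral>\<^sup>+x. U i x \<partial>P) + (\<integral>\<^sup>+x. U i x \<partial>Q))"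
    using seq U by (simp add: nn_integral_monotone_convergence_SUP)
  also have "\<dots> = (SUP i. \<integral>\<^sup>+x. U i x \<partial>P) + (SUP i. \<integral>\<^sup>+x. U i x \<partial>Q)"
    by (rule ennreal_SUP_add[OF mono_int mono_int])
  also have "\<dots> = (\<integral>\<^sup>+x. (SUP i. U i x) \<partial>P) + (\<integral>\<^sup>+x. (SUP i. U i x) \<partial>Q)"
    using seq U by (simp add: nn_integral_monotone_convergence_SUP)
  finally show ?case by (simp add: SUP_apply image_image)
qed

section \<open>Hoeffding's inequality for i.i.d. samples\<close>

lemma indep_vars_PiM_components:
  assumes L: "prob_space L" and I: "I \<noteq> {}"
  shows "prob_space.indep_vars (PiM I (\<lambda>_. L)) (\<lambda>_. L) (\<lambda>i \<omega>. \<omega> i) I"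
proof -
  interpret product_prob_space "\<lambda>_. L" I
    using L by (simp add: product_prob_space_def product_sigma_finite_def
        prob_space_imp_sigma_finite product_prob_space_axioms_def)
  have "prob_space (PiM I (\<lambda>_. L))"
    using L by (intro prob_space_PiM) auto
  moreover have "distr (PiM I (\<lambda>_. L)) (PiM I (\<lambda>_. L)) (\<lambda>x. \<lambda>i\<in>I. x i) = PiM I (\<lambda>_. L)"
    by (subst distr_cong[of _ _ _ _ _ "\<lambda>x. x"]) (auto simp: space_PiM PiE_def extensional_restrict)
  ultimately show ?thesis
    using I by (subst prob_space.indep_vars_iff_distr_eq_PiM')
      (auto intro!: PiM_cong simp: PiM_component)
qed

lemma distr_PiM_component_compose:
  assumes L: "prob_space L" and j: "j \<in> I" and f: "f \<in> measurable L N"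
  shows "distr (PiM I (\<lambda>_. L)) N (\<lambda>\<omega>. f (\<omega> j)) = distr L N f"
proof -
  have "distr (PiM I (\<lambda>_. L)) N (\<lambda>\<omega>. f (\<omega> j)) = distr (distr (PiM I (\<lambda>_. L)) L (\<lambda>\<omega>. \<omega> j)) N f"
    using f j by (subst distr_distr) (auto simp: comp_def)
  also have "\<dots> = distr L N f"
    using distr_PiM_component[of I "\<lambda>_. L" j] L j by simp
  finally show ?thesis .
qed

context
  fixes L :: "'b measure" and f :: "'b \<Rightarrow> real" and a b :: real and n :: nat
  assumes L: "prob_space L" and f: "f \<in> borel_measurable L" "\<And>x. x \<in> space L \<Longrightarrow> f x \<in> {a..b}"
    and ab: "a < b" and n: "0 < n"
begin

interpretation M: prob_space "PiM {..<n} (\<lambda>_. L)"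
  using L by (intro prob_space_PiM) auto

interpretation Hoeffding_ineq_iid "PiM {..<n} (\<lambda>_. L)" "{..<n}" "\<lambda>j \<omega>. f (\<omega> j)" "\<lambda>\<omega>. f (\<omega> 0)"
  a b "integral\<^sup>L L f"
proof unfold_locales
  have "M.indep_vars (\<lambda>_. L) (\<lambda>j \<omega>. \<omega> j) {..<n}"
    using indep_vars_PiM_components[OF L, of "{..<n}"] n by auto
  then show "M.indep_vars (\<lambda>_. borel) (\<lambda>j \<omega>. f (\<omega> j)) {..<n}"
    using M.indep_vars_compose2[of "\<lambda>_. L" "\<lambda>j \<omega>. \<omega> j" "{..<n}" "\<lambda>_. f" "\<lambda>_. borel"] f
    by auto
  show "distr (PiM {..<n} (\<lambda>_. L)) borel (\<lambda>\<omega>. f (\<omega> j))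
      = distr (PiM {..<n} (\<lambda>_. L)) borel (\<lambda>\<omega>. f (\<omega> 0))" if "j \<in> {..<n}" for j
    using that n L f by (simp add: distr_PiM_component_compose)
  show "(\<lambda>\<omega>. f (\<omega> 0)) \<in> borel_measurable (PiM {..<n} (\<lambda>_. L))"
    using f measurable_component_singleton[of 0 "{..<n}" "\<lambda>_. L"] n by simp
  show "AE \<omega> in PiM {..<n} (\<lambda>_. L). f (\<omega> 0) \<in> {a..b}"
    using f n L by (intro AE_PiM_component) auto
  show "integral\<^sup>L L f \<equiv> M.expectation (\<lambda>\<omega>. f (\<omega> 0))"
    using integral_distr[OF measurable_component_singleton[of 0 "{..<n}" "\<lambda>_. L"], of f]
      distr_PiM_component[of "{..<n}" "\<lambda>_. L" 0] L f n by simp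
qed simp

lemma
  fixes \<epsilon> :: real
  assumes "0 \<le> \<epsilon>"
  shows Hoeffding_PiM_le: "measure (PiM {..<n} (\<lambda>_. L))
      {s \<in> space (PiM {..<n} (\<lambda>_. L)). (\<Sum>j<n. f (s j)) / real n \<le> integral\<^sup>L L f - \<epsilon>}
      \<le> exp (-2 * real n * \<epsilon>\<^sup>2 / (b - a)\<^sup>2)"
    and Hoeffding_PiM_abs_ge: "measure (PiM {..<n} (\<lambda>_. L))
      {s \<in> space (PiM {..<n} (\<lambda>_. L)). \<epsilon> \<le> \<bar>(\<Sum>j<n. f (s j)) / real n - integral\<^sup>L L f\<bar>}
      \<le> 2 * exp (-2 * real n * \<epsilon>\<^sup>2 / (b - a)\<^sup>2)"
  using Hoeffding_ineq_le'[OF assms ab] Hoeffding_ineq_abs_ge'[OF assms ab] n by (simp_all add: lessThan_empty_iff)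

end

(* With x / 0 = 0 the frequency is 0 when no sample point lies in F, as for an empty class. *)
definition empirical_cond_freq :: "'b set \<Rightarrow> 'b set \<Rightarrow> nat \<Rightarrow> (nat \<Rightarrow> 'b) \<Rightarrow> real" where
  "empirical_cond_freq E F n s = (\<Sum>j<n. indicator E (s j)) / (\<Sum>j<n. indicator F (s j))"

lemma measurable_empirical_cond_freq [measurable]:
  assumes "E \<in> sets L" "F \<in> sets L"
  shows "empirical_cond_freq E F n \<in> borel_measurable (PiM {..<n} (\<lambda>_. L))"
  unfolding empirical_cond_freq_def[abs_def] using assms by measurable

lemma empirical_cond_freq_close:
  assumes n: "0 < n" and c: "0 < c"
    and count: "c / 2 < (\<Sum>j<n. indicator F (s j)) / n"
    and sums: "\<bar>(\<Sum>j<n. indicator E (s j)) / n - q * ((\<Sum>j<n. indicator F (s j)) / n)\<bar> < t * c / 2"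
  shows "\<bar>empirical_cond_freq E F n s - q\<bar> < t"
proof -
  define S where "S = (\<Sum>j<n. indicator E (s j)) / real n"
  define m where "m = (\<Sum>j<n. indicator F (s j)) / real n"
  have "c / 2 < m"
    unfolding m_def by (rule count)
  with c have m: "0 < m" "c / 2 < m"
    by linarith+
  have sums: "\<bar>S - q * m\<bar> < t * c / 2"
    unfolding S_def m_def by (rule sums)
  have "\<bar>empirical_cond_freq E F n s - q\<bar> = \<bar>S - q * m\<bar> / m"
    using n m by (simp add: empirical_cond_freq_def S_def m_def field_simps)
  also have "\<dots> < (t * c / 2) / m"
    using m sums by (intro divide_strict_right_mono)
  also have "\<dots> \<le> (t * c / 2) / (c / 2)"
    using c m sums abs_ge_zero[of "S - q * m"] by (intro frac_le) linarith+
  finally show ?thesis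
    using c by simp
qed

lemma empirical_cond_freq_deviation:
  assumes L: "prob_space L" and E: "E \<in> sets L" "E \<subseteq> F" and F: "F \<in> sets L" "0 < measure L F"
    and n: "0 < n" and t: "0 < t"
  defines "M \<equiv> PiM {..<n} (\<lambda>_. L)" and "pF \<equiv> measure L F"
  shows "measure M {s \<in> space M. t \<le> \<bar>empirical_cond_freq E F n s - measure L E / pF\<bar>}
      \<le> 2 * exp (- real n * t\<^sup>2 * pF\<^sup>2 / 8) + exp (- real n * pF\<^sup>2 / 2)"
proof -
  interpret L: prob_space L by (rule L)
  interpret M: prob_space M
    unfolding M_def using L by (intro prob_space_PiM) auto
  define q where "q = measure L E / pF"
  have q: "0 \<le> q" "q \<le> 1"
    using L.finite_measure_mono[OF E(2) F(1)] F(2) by (auto simp: q_def pF_def)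
  define f where "f x = indicator E x - q * indicator F x" for x
  have f: "f x \<in> {-1..1}" for x
    using q E(2) by (auto simp: f_def indicator_def)
  have "integral\<^sup>L L f = measure L E - q * pF"
    unfolding f_def[abs_def] using E F
    by (subst Bochner_Integration.integral_diff) (auto simp: pF_def L.emeasure_eq_measure)
  then have int_f: "integral\<^sup>L L f = 0"
    using F(2) by (simp add: q_def pF_def)
  have int_F: "integral\<^sup>L L (indicator F) = pF"
    using F by (simp add: pF_def)
  define A1 where "A1 = {s \<in> space M. t * pF / 2 \<le> \<bar>(\<Sum>j<n. f (s j)) / n - integral\<^sup>L L f\<bar>}"
  define A2 where "A2 = {s \<in> space M. (\<Sum>j<n. indicator F (s j)) / n \<le> integral\<^sup>L L (indicator F) - pF / 2}"
  have "measure M A1 \<le> 2 * exp (-2 * real n * (t * pF / 2)\<^sup>2 / (1 - -1)\<^sup>2)"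
    unfolding A1_def M_def
    by (rule Hoeffding_PiM_abs_ge[OF L _ f]) (use E F t n in \<open>auto simp: f_def pF_def\<close>)
  also have "\<dots> = 2 * exp (- real n * t\<^sup>2 * pF\<^sup>2 / 8)"
    by (simp add: power2_eq_square)
  finally have A1: "measure M A1 \<le> 2 * exp (- real n * t\<^sup>2 * pF\<^sup>2 / 8)" .
  have "measure M A2 \<le> exp (-2 * real n * (pF / 2)\<^sup>2 / (1 - 0)\<^sup>2)"
    unfolding A2_def M_def
    by (rule Hoeffding_PiM_le[OF L]) (use F n in \<open>auto simp: pF_def\<close>)
  also have "\<dots> = exp (- real n * pF\<^sup>2 / 2)"
    by (simp add: power2_eq_square)
  finally have A2: "measure M A2 \<le> exp (- real n * pF\<^sup>2 / 2)" .
  have "{s \<in> space M. t \<le> \<bar>empirical_cond_freq E F n s - q\<bar>} \<subseteq> A1 \<union> A2"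
  proof (intro subsetI, rule ccontr)
    fix s assume s: "s \<in> {s \<in> space M. t \<le> \<bar>empirical_cond_freq E F n s - q\<bar>}" "s \<notin> A1 \<union> A2"
    have "(\<Sum>j<n. f (s j)) / n - integral\<^sup>L L f
        = (\<Sum>j<n. indicator E (s j)) / n - q * ((\<Sum>j<n. indicator F (s j)) / n)"
      by (simp add: int_f f_def sum_subtractf sum_distrib_left diff_divide_distrib)
    with s have "\<bar>empirical_cond_freq E F n s - q\<bar> < t"
      using n F(2) int_F by (intro empirical_cond_freq_close[where c = pF]) (auto simp: A1_def A2_def pF_def)
    with s show False
      by simp
  qed
  moreover have A_sets: "A1 \<in> sets M" "A2 \<in> sets M"
    unfolding A1_def A2_def M_def f_def using E F by measurable
  ultimately have "measure M {s \<in> space M. t \<le> \<bar>empirical_cond_freq E F n s - q\<bar>} \<le> measure M (A1 \<union> A2)"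
    by (intro M.finite_measure_mono) auto
  also have "\<dots> \<le> measure M A1 + measure M A2"
    using A_sets by (rule measure_Un_le)
  finally show ?thesis
    using A1 A2 by (simp add: q_def)
qed

section \<open>The training sample and the kernel classifier\<close>

definition deviation_bound :: "real \<Rightarrow> nat \<Rightarrow> real \<Rightarrow> real" where
  "deviation_bound v n t = 2 * exp (- real n * t\<^sup>2 * v\<^sup>2 / 8) + exp (- real n * v\<^sup>2 / 2)"

lemma deviation_bound_antimono:
  assumes "0 \<le> v" "v \<le> v'"
  shows "deviation_bound v' n t \<le> deviation_bound v n t"
proof -
  have "v\<^sup>2 \<le> v'\<^sup>2"
    using assms by (intro power_mono) auto
  then have "real n * t\<^sup>2 * v\<^sup>2 \<le> real n * t\<^sup>2 * v'\<^sup>2" "real n * v\<^sup>2 \<le> real n * v'\<^sup>2"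
    by (simp_all add: mult_left_mono)
  then show ?thesis
    unfolding deviation_bound_def by (intro add_mono) auto
qed

lemma K_dist_divide: "0 < h \<Longrightarrow> K (dist z y / h) = indicator (ball z h) y"
  by (auto simp: K_def indicator_def divide_less_eq)

lemma pX_hat_eq_empirical_cond_freq:
  assumes "0 < h"
  shows "pX_hat n h s z = empirical_cond_freq (ball z h \<times> {False}) (UNIV \<times> {False}) n s"
proof -
  have "(if snd x then 0 else 1) * K (dist z (fst x) / h) = indicator (ball z h \<times> {False}) x"
    "(if snd x then 0 else 1 :: real) = indicator (UNIV \<times> {False}) x" for x :: "'a \<times> bool"
    using assms by (auto simp: K_dist_divide indicator_def mem_Times_iff)
  then show ?thesis
    unfolding pX_hat_def empirical_cond_freq_def Let_def by simp
qed

lemma pY_hat_eq_empirical_cond_freq: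
  assumes "0 < h"
  shows "pY_hat n h s z = empirical_cond_freq (ball z h \<times> {True}) (UNIV \<times> {True}) n s"
proof -
  have "(if snd x then 1 else 0) * K (dist z (fst x) / h) = indicator (ball z h \<times> {True}) x"
    "(if snd x then 1 else 0 :: real) = indicator (UNIV \<times> {True}) x" for x :: "'a \<times> bool"
    using assms by (auto simp: K_dist_divide indicator_def mem_Times_iff)
  then show ?thesis
    unfolding pY_hat_def empirical_cond_freq_def Let_def by simp
qed

lemma less_iff_less_of_close:
  fixes a b A B \<delta> :: real
  assumes "\<bar>a - A\<bar> < \<delta> / 2" "\<bar>b - B\<bar> < \<delta> / 2" "\<delta> \<le> \<bar>A - B\<bar>"
  shows "a < b \<longleftrightarrow> A < B"
  using assms by (cases "A < B") (simp_all add: abs_if split: if_splits)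

definition labelled :: "'a::topological_space measure \<Rightarrow> bool \<Rightarrow> ('a \<times> bool) measure" where
  "labelled P b = distr P (borel \<Otimes>\<^sub>M count_space UNIV) (\<lambda>z. (z, b))"

lemma labelled_in_prob_algebra:
  assumes "prob_space P" "sets P = sets borel"
  shows "labelled P b \<in> space (prob_algebra (borel \<Otimes>\<^sub>M count_space UNIV))"
  unfolding labelled_def space_prob_algebra
  using assms by (auto intro!: prob_space.prob_space_distr simp: measurable_cong_sets[OF assms(2) refl])

lemma measure_labelled_Times:
  assumes "sets P = sets borel" "A \<in> sets borel"
  shows "measure (labelled P b) (A \<times> {b'}) = (if b' = b then measure P A else 0)"
  unfolding labelled_def using assms
  by (subst measure_distr) (auto simp: vimage_def measurable_cong_sets[OF assms(1) refl])

context
  fixes PX PY :: "'a::metric_space measure" and w :: real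
  assumes PX: "prob_space PX" "sets PX = sets borel"
    and PY: "prob_space PY" "sets PY = sets borel"
    and w: "0 < w" "w < 1"
begin

lemma sample_law_eq_bind: "sample_law w PX PY = measure_pmf (bernoulli_pmf w) \<bind> (\<lambda>b. labelled (if b then PY else PX) b)"
  unfolding sample_law_def labelled_def by (simp add: if_distrib)

lemma measurable_labelled:
  "(\<lambda>b. labelled (if b then PY else PX) b)
     \<in> measurable (measure_pmf (bernoulli_pmf w)) (prob_algebra (borel \<Otimes>\<^sub>M count_space UNIV))"
  using labelled_in_prob_algebra PX PY by (auto simp: Pi_iff)

lemma prob_space_sample_law: "prob_space (sample_law w PX PY)"
  unfolding sample_law_eq_bind
  by (rule prob_space_bind'[OF _ measurable_labelled]) (simp add: space_prob_algebra prob_space_measure_pmf)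

lemma sets_sample_law: "sets (sample_law w PX PY) = sets (borel \<Otimes>\<^sub>M count_space UNIV)"
  unfolding sample_law_eq_bind
  by (rule sets_bind'[OF _ measurable_labelled]) (simp add: space_prob_algebra prob_space_measure_pmf)

lemma measure_sample_law_Times:
  assumes A: "A \<in> sets borel"
  shows "measure (sample_law w PX PY) (A \<times> {b}) = (if b then w * measure PY A else (1 - w) * measure PX A)"
proof -
  let ?X = "A \<times> {b}"
  have X: "?X \<in> sets (borel \<Otimes>\<^sub>M count_space UNIV)"
    using A by simp
  have "emeasure (sample_law w PX PY) ?X
      = (\<integral>\<^sup>+b'. emeasure (labelled (if b' then PY else PX) b') ?X \<partial>measure_pmf (bernoulli_pmf w))"
    unfolding sample_law_eq_bind
    by (rule emeasure_bind_prob_algebra[OF _ measurable_labelled X])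
      (simp add: space_prob_algebra prob_space_measure_pmf)
  also have "\<dots> = ennreal (if b then w * measure PY A else (1 - w) * measure PX A)"
    using labelled_in_prob_algebra[OF PX] labelled_in_prob_algebra[OF PY] w A PX(2) PY(2)
    by (auto simp: space_prob_algebra finite_measure.emeasure_eq_measure[OF prob_space.finite_measure] measure_labelled_Times
        nn_integral_bernoulli_pmf ennreal_mult' mult.commute)
  finally show ?thesis
    using prob_space_sample_law w by (simp add: finite_measure.emeasure_eq_measure[OF prob_space.finite_measure] measure_nonneg)
qed


lemma sample_class_freq_deviation:
  assumes A: "A \<in> sets borel" and n: "0 < n" and t: "0 < t"
  shows "measure (PiM {..<n} (\<lambda>_. sample_law w PX PY))
      {s \<in> space (PiM {..<n} (\<lambda>_. sample_law w PX PY)).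
        t \<le> \<bar>empirical_cond_freq (A \<times> {b}) (UNIV \<times> {b}) n s - measure (if b then PY else PX) A\<bar>}
    \<le> deviation_bound (min w (1 - w)) n t"
proof -
  let ?L = "sample_law w PX PY" and ?pF = "if b then w else 1 - w"
  have "measure PX UNIV = 1" "measure PY UNIV = 1"
    using prob_space.prob_space[OF PX(1)] prob_space.prob_space[OF PY(1)]
      sets_eq_imp_space_eq[OF PX(2)] sets_eq_imp_space_eq[OF PY(2)] by simp_all
  then have pF: "measure ?L (UNIV \<times> {b}) = ?pF"
    using measure_sample_law_Times[of UNIV b] by simp
  have ratio: "measure ?L (A \<times> {b}) / ?pF = measure (if b then PY else PX) A"
    using measure_sample_law_Times[OF A, of b] w by (cases b) simp_all
  have sets: "A \<times> {b} \<in> sets ?L" "UNIV \<times> {b} \<in> sets ?L"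
    using A by (simp_all add: sets_sample_law)
  have "0 < measure ?L (UNIV \<times> {b})"
    using pF w by simp
  moreover have "A \<times> {b} \<subseteq> UNIV \<times> {b}"
    by auto
  ultimately
  have "measure (PiM {..<n} (\<lambda>_. ?L))
      {s \<in> space (PiM {..<n} (\<lambda>_. ?L)).
        t \<le> \<bar>empirical_cond_freq (A \<times> {b}) (UNIV \<times> {b}) n s - measure (if b then PY else PX) A\<bar>}
    \<le> deviation_bound ?pF n t"
    using empirical_cond_freq_deviation[OF prob_space_sample_law sets(1) _ sets(2) _ n t]
    unfolding pF ratio deviation_bound_def by blast
  also have "\<dots> \<le> deviation_bound (min w (1 - w)) n t"
    using w by (intro deviation_bound_antimono) auto
  finally show ?thesis .
qed

lemma prob_wrong_decision_le:
  assumes n: "0 < n" and h: "0 < h"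
    and \<delta>: "0 < \<delta>" "\<delta> \<le> \<bar>measure PX (ball z h) - measure PY (ball z h)\<bar>"
  defines "S \<equiv> PiM {..<n} (\<lambda>_. sample_law w PX PY)"
  shows "measure S {s \<in> space S. phi n h s z \<noteq> (measure PX (ball z h) < measure PY (ball z h))}
      \<le> 2 * deviation_bound (min w (1 - w)) n (\<delta> / 2)"
proof -
  interpret S: prob_space S
    unfolding S_def using prob_space_sample_law by (intro prob_space_PiM) auto
  let ?B = "ball z h"
  define F where "F b = {s \<in> space S.
      \<delta> / 2 \<le> \<bar>empirical_cond_freq (?B \<times> {b}) (UNIV \<times> {b}) n s - measure (if b then PY else PX) ?B\<bar>}" for b
  have F_sets: "F b \<in> sets S" for b
    unfolding F_def S_def using sets_sample_law by measurable
  have "{s \<in> space S. phi n h s z \<noteq> (measure PX ?B < measure PY ?B)} \<subseteq> F False \<union> F True"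
  proof (intro subsetI, rule ccontr)
    fix s assume s: "s \<in> {s \<in> space S. phi n h s z \<noteq> (measure PX ?B < measure PY ?B)}"
      "s \<notin> F False \<union> F True"
    then have "pX_hat n h s z < pY_hat n h s z \<longleftrightarrow> measure PX ?B < measure PY ?B"
      using \<delta>(2) by (intro less_iff_less_of_close[where \<delta> = \<delta>])
        (auto simp: F_def pX_hat_eq_empirical_cond_freq[OF h] pY_hat_eq_empirical_cond_freq[OF h])
    with s show False
      by (simp add: phi_def not_le)
  qed
  then have "measure S {s \<in> space S. phi n h s z \<noteq> (measure PX ?B < measure PY ?B)}
      \<le> measure S (F False) + measure S (F True)"
    using F_sets by (meson S.finite_measure_mono measure_Un_le order_trans sets.Un)
  also have "\<dots> \<le> 2 * deviation_bound (min w (1 - w)) n (\<delta> / 2)"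
  proof -
    have "measure S (F b) \<le> deviation_bound (min w (1 - w)) n (\<delta> / 2)" for b
      unfolding F_def S_def by (intro sample_class_freq_deviation) (use n \<delta> in auto)
    from this[of False] this[of True] show ?thesis by linarith
  qed
  finally show ?thesis .
qed

end

lemma borel_measurable_K [measurable]: "K \<in> borel_measurable borel"
  unfolding K_def[abs_def] by measurable

lemma measurable_phi:
  fixes PZ :: "'a::{metric_space, second_countable_topology} measure"
  assumes L: "sets L = sets (borel \<Otimes>\<^sub>M count_space UNIV)" and PZ: "sets PZ = sets borel"
  shows "Measurable.pred (PiM {..<n} (\<lambda>_. L) \<Otimes>\<^sub>M PZ) (\<lambda>x. phi n h (fst x) (snd x))"
proof -
  have "sets (PiM {..<n} (\<lambda>_. L) \<Otimes>\<^sub>M PZ)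
      = sets (PiM {..<n} (\<lambda>_. borel \<Otimes>\<^sub>M count_space UNIV) \<Otimes>\<^sub>M (borel :: 'a measure))"
    using L PZ by (intro sets_pair_measure_cong sets_PiM_cong) auto
  moreover have "Measurable.pred (PiM {..<n} (\<lambda>_. borel \<Otimes>\<^sub>M count_space UNIV) \<Otimes>\<^sub>M (borel :: 'a measure))
      (\<lambda>x. phi n h (fst x) (snd x))" (is "Measurable.pred ?M _")
  proof -
    have sample: "(\<lambda>x. fst x j) \<in> measurable ?M (borel \<Otimes>\<^sub>M count_space UNIV)" if "j \<in> {..<n}" for j
      by (rule measurable_compose[OF measurable_fst measurable_component_singleton[OF that]])
    have label: "Measurable.pred ?M (\<lambda>x. snd (fst x j))" if "j \<in> {..<n}" for j
      using measurable_compose[OF sample[OF that] measurable_snd] by simp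
    have point: "(\<lambda>x. fst (fst x j)) \<in> borel_measurable ?M" if "j \<in> {..<n}" for j
      using measurable_compose[OF sample[OF that] measurable_fst] by simp
    have [measurable]: "(\<lambda>x. K (dist (snd x) (fst (fst x j)) / h)) \<in> borel_measurable ?M" if "j \<in> {..<n}" for j
      by (intro measurable_compose[OF _ borel_measurable_K] borel_measurable_divide borel_measurable_dist
          measurable_snd point[OF that] measurable_const) simp
    have [measurable]: "(\<lambda>x. if snd (fst x j) then a else b :: real) \<in> borel_measurable ?M" if "j \<in> {..<n}" for j a b
      using label[OF that] by measurable
    have "(\<lambda>x. pX_hat n h (fst x) (snd x)) \<in> borel_measurable ?M"
      "(\<lambda>x. pY_hat n h (fst x) (snd x)) \<in> borel_measurable ?M"
      unfolding pX_hat_def pY_hat_def Let_def by measurable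
    then show ?thesis
      unfolding phi_def by measurable
  qed
  ultimately show ?thesis
    by (subst measurable_cong_sets[OF _ refl])
qed

lemma measure_pair_measure_eq_integral:
  assumes M: "prob_space M" and N: "prob_space N"
    and R: "Measurable.pred (M \<Otimes>\<^sub>M N) (\<lambda>x. R (fst x) (snd x))"
  shows "measure (M \<Otimes>\<^sub>M N) {x \<in> space (M \<Otimes>\<^sub>M N). R (fst x) (snd x)}
      = (\<integral>z. measure M {s \<in> space M. R s z} \<partial>N)"
    and "(\<lambda>z. measure M {s \<in> space M. R s z}) \<in> borel_measurable N"
proof -
  interpret pair_sigma_finite M N
    unfolding pair_sigma_finite_def using M N by (simp add: prob_space_imp_sigma_finite)
  let ?E = "{x \<in> space (M \<Otimes>\<^sub>M N). R (fst x) (snd x)}"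
  have E: "?E \<in> sets (M \<Otimes>\<^sub>M N)"
    using R by simp
  have slice: "(\<lambda>s. (s, z)) -` ?E = {s \<in> space M. R s z}" if "z \<in> space N" for z
    using that by (auto simp: space_pair_measure)
  have "(\<lambda>z. enn2real (emeasure M ((\<lambda>s. (s, z)) -` ?E))) \<in> borel_measurable N"
    using measurable_emeasure_Pair2[OF E] by measurable
  then show meas: "(\<lambda>z. measure M {s \<in> space M. R s z}) \<in> borel_measurable N"
    by (rule measurable_cong[THEN iffD1, rotated]) (simp only: slice measure_def)
  have "emeasure (M \<Otimes>\<^sub>M N) ?E = (\<integral>\<^sup>+z. ennreal (measure M {s \<in> space M. R s z}) \<partial>N)"
    unfolding emeasure_pair_measure_alt2[OF E] using M
    by (intro nn_integral_cong) (simp only: slice finite_measure.emeasure_eq_measure[OF prob_space.finite_measure])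
  also have "\<dots> = ennreal (\<integral>z. measure M {s \<in> space M. R s z} \<partial>N)"
    using meas by (intro nn_integral_eq_integral)
      (auto intro!: finite_measure.integrable_const_bound[OF prob_space.finite_measure[OF N], where B = 1]
        simp: prob_space.prob_le_1[OF M])
  finally show "measure (M \<Otimes>\<^sub>M N) ?E = (\<integral>z. measure M {s \<in> space M. R s z} \<partial>N)"
    by (simp add: measure_def integral_nonneg_AE)
qed

section \<open>Densities with respect to the sum of the class laws\<close>

locale class_density =
  fixes PX PY :: "'a::metric_space measure" and p :: "'a \<Rightarrow> real"
  assumes PX: "prob_space PX" "sets PX = sets borel"
    and PY: "prob_space PY" "sets PY = sets borel"
    and p_measurable: "p \<in> borel_measurable borel" and p_nonneg: "\<And>x. 0 \<le> p x"
    and density_PX: "density (sum_meas PX PY) (\<lambda>x. ennreal (p x)) = PX"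
begin

abbreviation \<mu> :: "'a measure" where "\<mu> \<equiv> sum_meas PX PY"

lemma sets_\<mu> [simp]: "sets \<mu> = sets borel"
  using sets_sum_meas[of PY PX] PX(2) PY(2) by simp

lemma space_\<mu> [simp]: "space \<mu> = UNIV"
  using sets_eq_imp_space_eq[OF sets_\<mu>] by simp

lemma measurable_\<mu> [simp]: "measurable \<mu> M = measurable borel M"
  by (rule measurable_cong_sets[OF sets_\<mu> refl])

lemma measurable_PX [simp]: "measurable PX M = measurable borel M"
  by (rule measurable_cong_sets[OF PX(2) refl])

lemma measurable_PY [simp]: "measurable PY M = measurable borel M"
  by (rule measurable_cong_sets[OF PY(2) refl])

lemma space_PX [simp]: "space PX = UNIV" and space_PY [simp]: "space PY = UNIV"
  using sets_eq_imp_space_eq[OF PX(2)] sets_eq_imp_space_eq[OF PY(2)] by simp_all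

lemma emeasure_\<mu>: "A \<in> sets borel \<Longrightarrow> emeasure \<mu> A = emeasure PX A + emeasure PY A"
  using emeasure_sum_meas[of PY PX A] PX(2) PY(2) by simp

lemma measure_PX_UNIV: "measure PX UNIV = 1" and measure_PY_UNIV: "measure PY UNIV = 1"
  using prob_space.prob_space[OF PX(1)] prob_space.prob_space[OF PY(1)] by simp_all

sublocale \<mu>: finite_measure \<mu>
  using emeasure_\<mu>[of UNIV] measure_PX_UNIV measure_PY_UNIV PX(1) PY(1)
  by (intro finite_measureI) (simp add: finite_measure.emeasure_eq_measure[OF prob_space.finite_measure])

lemma measure_\<mu>: "A \<in> sets borel \<Longrightarrow> measure \<mu> A = measure PX A + measure PY A"
  using emeasure_\<mu>[of A] PX(1) PY(1)
  by (simp add: \<mu>.emeasure_eq_measure finite_measure.emeasure_eq_measure[OF prob_space.finite_measure]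
      flip: ennreal_plus)

lemma measure_\<mu>_UNIV: "measure \<mu> UNIV = 2"
  using measure_\<mu>[of UNIV] measure_PX_UNIV measure_PY_UNIV by simp

lemma integrable_p: "integrable \<mu> p"
proof -
  have "(\<integral>\<^sup>+x. ennreal (p x) \<partial>\<mu>) = emeasure PX UNIV"
    using emeasure_density[of "\<lambda>x. ennreal (p x)" \<mu> UNIV] density_PX p_measurable by simp
  then show ?thesis
    using p_nonneg p_measurable prob_space.emeasure_space_1[OF PX(1)]
    by (intro integrableI_nonneg) auto
qed

lemma integral_PX: "(f :: 'a \<Rightarrow> real) \<in> borel_measurable borel \<Longrightarrow> (\<integral>x. f x \<partial>PX) = (\<integral>x. p x * f x \<partial>\<mu>)"
  using integral_density[of f \<mu> p] density_PX p_measurable p_nonneg by simp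

lemma integral_\<mu>:
  fixes f :: "'a \<Rightarrow> real"
  assumes f: "f \<in> borel_measurable borel" "\<And>x. 0 \<le> f x" "\<And>x. f x \<le> 1"
  shows "(\<integral>x. f x \<partial>\<mu>) = (\<integral>x. f x \<partial>PX) + (\<integral>x. f x \<partial>PY)"
proof -
  have integrable: "integrable M f" if "finite_measure M" "f \<in> borel_measurable M" for M
    using f that by (intro finite_measure.integrable_const_bound[where B = 1]) auto
  have "ennreal (\<integral>x. f x \<partial>\<mu>) = (\<integral>\<^sup>+x. ennreal (f x) \<partial>\<mu>)"
    using integrable[of \<mu>] f \<mu>.finite_measure_axioms by (simp add: nn_integral_eq_integral)
  also have "\<dots> = (\<integral>\<^sup>+x. ennreal (f x) \<partial>PX) + (\<integral>\<^sup>+x. ennreal (f x) \<partial>PY)"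
    using f PX(2) PY(2) by (intro nn_integral_sum_meas) (auto cong: measurable_cong_sets)
  also have "\<dots> = ennreal ((\<integral>x. f x \<partial>PX) + (\<integral>x. f x \<partial>PY))"
    using integrable[of PX] integrable[of PY] PX PY f
    by (simp add: nn_integral_eq_integral prob_space.finite_measure integral_nonneg_AE)
  finally show ?thesis
    using f by (simp add: integral_nonneg_AE flip: ennreal_plus)
qed

lemma integral_PX_diff_PY:
  fixes f :: "'a \<Rightarrow> real"
  assumes f: "f \<in> borel_measurable borel" "\<And>x. 0 \<le> f x" "\<And>x. f x \<le> 1"
  shows "(\<integral>x. f x \<partial>PX) - (\<integral>x. f x \<partial>PY) = (\<integral>x. (2 * p x - 1) * f x \<partial>\<mu>)"
proof -
  have "integrable \<mu> f"
    using f by (intro \<mu>.integrable_const_bound[where B = 1]) auto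
  moreover have "integrable \<mu> (\<lambda>x. p x * f x)"
    using f p_nonneg p_measurable by (intro Bochner_Integration.integrable_bound[OF integrable_p])
      (auto intro!: mult_left_le simp: abs_mult)
  ultimately have "(\<integral>x. (2 * p x - 1) * f x \<partial>\<mu>) = 2 * (\<integral>x. p x * f x \<partial>\<mu>) - (\<integral>x. f x \<partial>\<mu>)"
    by (simp add: left_diff_distrib mult.assoc)
  then show ?thesis
    using integral_PX[OF f(1)] integral_\<mu>[OF f] by simp
qed

lemma measure_PX_diff_PY:
  "A \<in> sets borel \<Longrightarrow> measure PX A - measure PY A = (\<integral>x. (2 * p x - 1) * indicator A x \<partial>\<mu>)"
  using integral_PX_diff_PY[of "indicator A"] by simp


lemma integral_p: "(\<integral>x. p x \<partial>\<mu>) = 1"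
  using integral_PX[of "\<lambda>_. 1"] prob_space.prob_space[OF PX(1)] by simp

lemma TV_le_integral: "TV PX PY \<le> (\<integral>x. max 0 (1 - 2 * p x) \<partial>\<mu>)"
proof -
  define D where "D = (\<integral>x. max 0 (1 - 2 * p x) \<partial>\<mu>)"
  have int_lin: "integrable \<mu> (\<lambda>x. 2 * p x - 1)"
    using integrable_p by simp
  have int_pos: "integrable \<mu> (\<lambda>x. max 0 (2 * p x - 1))"
    using int_lin by (intro integrable_max) auto
  have int_neg: "integrable \<mu> (\<lambda>x. max 0 (1 - 2 * p x))"
    using integrable_p by (intro integrable_max) auto
  have "(\<integral>x. 2 * p x - 1 \<partial>\<mu>) = 0"
    using integrable_p integral_p measure_\<mu>_UNIV by simp
  moreover have "(\<integral>x. max 0 (2 * p x - 1) \<partial>\<mu>) = (\<integral>x. max 0 (1 - 2 * p x) + (2 * p x - 1) \<partial>\<mu>)"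
    by (intro Bochner_Integration.integral_cong) auto
  ultimately have D_pos: "(\<integral>x. max 0 (2 * p x - 1) \<partial>\<mu>) = D"
    using int_neg int_lin by (simp add: D_def)
  have "\<bar>measure PX A - measure PY A\<bar> \<le> D" if A: "A \<in> sets borel" for A
  proof -
    have "(\<integral>x. (2 * p x - 1) * indicator A x \<partial>\<mu>) \<le> (\<integral>x. max 0 (2 * p x - 1) \<partial>\<mu>)"
      using A int_lin int_pos by (intro integral_mono integrable_real_mult_indicator) (auto split: split_indicator)
    moreover have "- (\<integral>x. (2 * p x - 1) * indicator A x \<partial>\<mu>) \<le> (\<integral>x. max 0 (1 - 2 * p x) \<partial>\<mu>)"
      using A int_lin int_neg
      by (subst integral_minus[symmetric], intro integral_mono integrable_minus integrable_real_mult_indicator)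
        (auto split: split_indicator)
    ultimately show ?thesis
      using measure_PX_diff_PY[OF A] D_pos by (simp add: D_def abs_le_iff)
  qed
  then show ?thesis
    unfolding TV_def D_def[symmetric] by (intro cSUP_least) auto
qed

lemma risk_le_integral:
  fixes q :: "'a \<Rightarrow> real"
  assumes q: "q \<in> borel_measurable borel" "\<And>z. 0 \<le> q z" "\<And>z. q z \<le> 1"
  shows "(\<integral>z. q z \<partial>PX) + (\<integral>z. 1 - q z \<partial>PY) - 1 + TV PX PY
      \<le> (\<integral>z. \<bar>2 * p z - 1\<bar> * (if 1 \<le> 2 * p z then q z else 1 - q z) \<partial>\<mu>)"
proof -
  have "integrable PY q"
    using q PY(1) by (intro finite_measure.integrable_const_bound[where B = 1])
      (auto simp: prob_space.finite_measure)
  from Bochner_Integration.integral_diff[OF finite_measure.integrable_const[OF prob_space.finite_measure[OF PY(1)]] this]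
  have "(\<integral>z. 1 - q z \<partial>PY) = 1 - (\<integral>z. q z \<partial>PY)"
    using measure_PY_UNIV by simp
  moreover have int1: "integrable \<mu> (\<lambda>z. (2 * p z - 1) * q z)"
  proof (rule Bochner_Integration.integrable_bound)
    show "integrable \<mu> (\<lambda>z. 2 * p z + 1)"
      using integrable_p by simp
    show "AE z in \<mu>. norm ((2 * p z - 1) * q z) \<le> norm (2 * p z + 1)"
    proof (intro AE_I2)
      fix z
      have "\<bar>2 * p z - 1\<bar> * q z \<le> \<bar>2 * p z - 1\<bar>"
        using q by (simp add: mult_left_le)
      then show "norm ((2 * p z - 1) * q z) \<le> norm (2 * p z + 1)"
        using p_nonneg[of z] q(2)[of z] by (simp add: abs_mult)
    qed
  qed (use q p_measurable in simp)
  moreover have int2: "integrable \<mu> (\<lambda>z. max 0 (1 - 2 * p z))"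
    using integrable_p by (intro integrable_max) auto
  moreover have "(2 * p z - 1) * q z + max 0 (1 - 2 * p z)
      = \<bar>2 * p z - 1\<bar> * (if 1 \<le> 2 * p z then q z else 1 - q z)" for z
    by (auto simp: abs_if algebra_simps)
  then have "(\<integral>z. \<bar>2 * p z - 1\<bar> * (if 1 \<le> 2 * p z then q z else 1 - q z) \<partial>\<mu>)
      = (\<integral>z. (2 * p z - 1) * q z \<partial>\<mu>) + (\<integral>z. max 0 (1 - 2 * p z) \<partial>\<mu>)"
    using Bochner_Integration.integral_add[OF int1 int2] by simp
  ultimately show ?thesis
    using integral_PX_diff_PY[OF q] TV_le_integral by linarith
qed

lemma
  assumes "A \<in> sets borel"
  shows integrable_indicator_affine: "integrable \<mu> (\<lambda>x. indicator A x * (a * p x + b))"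
    and integral_indicator_affine:
      "(\<integral>x. indicator A x * (a * p x + b) \<partial>\<mu>) = a * measure PX A + b * measure \<mu> A"
proof -
  have int: "integrable \<mu> (\<lambda>x. p x * indicator A x)" "integrable \<mu> (\<lambda>x. indicator A x :: real)"
    using assms integrable_p by (auto intro: integrable_real_mult_indicator \<mu>.integrable_const_bound[where B = 1])
  then show "integrable \<mu> (\<lambda>x. indicator A x * (a * p x + b))"
    by (simp add: algebra_simps)
  have "(\<integral>x. indicator A x * (a * p x + b) \<partial>\<mu>) = (\<integral>x. a * (p x * indicator A x) + b * indicator A x \<partial>\<mu>)"
    by (simp add: algebra_simps)
  also have "\<dots> = a * (\<integral>x. p x * indicator A x \<partial>\<mu>) + b * measure \<mu> A"
    using int assms by simp
  also have "(\<integral>x. p x * indicator A x \<partial>\<mu>) = measure PX A"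
    using integral_PX[of "indicator A"] assms by (simp add: mult.commute)
  finally show "(\<integral>x. indicator A x * (a * p x + b) \<partial>\<mu>) = a * measure PX A + b * measure \<mu> A" .
qed

lemma abs_density_gap_mult_le: "0 \<le> e \<Longrightarrow> e \<le> 1 \<Longrightarrow> \<bar>2 * p z - 1\<bar> * e \<le> 2 * p z + 1"
  using p_nonneg[of z] mult_left_le[of e "\<bar>2 * p z - 1\<bar>"] by (simp add: abs_le_iff)

lemma integrable_risk_density:
  fixes q :: "'a \<Rightarrow> real"
  assumes q: "q \<in> borel_measurable borel" "\<And>z. 0 \<le> q z" "\<And>z. q z \<le> 1"
  shows "integrable \<mu> (\<lambda>z. \<bar>2 * p z - 1\<bar> * (if 1 \<le> 2 * p z then q z else 1 - q z))"
proof (rule Bochner_Integration.integrable_bound)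
  show "integrable \<mu> (\<lambda>z. 2 * p z + 1)"
    using integrable_p by simp
  show "(\<lambda>z. \<bar>2 * p z - 1\<bar> * (if 1 \<le> 2 * p z then q z else 1 - q z)) \<in> borel_measurable \<mu>"
    using q(1) p_measurable by simp
  show "AE z in \<mu>. norm (\<bar>2 * p z - 1\<bar> * (if 1 \<le> 2 * p z then q z else 1 - q z)) \<le> norm (2 * p z + 1)"
  proof (intro AE_I2)
    fix z
    let ?err = "if 1 \<le> 2 * p z then q z else 1 - q z"
    have "0 \<le> ?err" "?err \<le> 1"
      using q(2,3)[of z] by auto
    then show "norm (\<bar>2 * p z - 1\<bar> * ?err) \<le> norm (2 * p z + 1)"
      using abs_density_gap_mult_le[of ?err z] p_nonneg[of z] by (simp add: abs_mult)
  qed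
qed

end

locale holder_class_density = class_density +
  fixes Y0 :: "'a set" and C \<beta> :: real
  assumes Y0: "Y0 \<in> sets borel" "emeasure \<mu> Y0 = 2"
    and C: "0 \<le> C" and \<beta>: "0 \<le> \<beta>"
    and holder: "\<And>y z. y \<in> Y0 \<Longrightarrow> z \<in> Y0 \<Longrightarrow> \<bar>p y - p z\<bar> \<le> C * dist y z powr \<beta>"
begin

lemma AE_in_Y0: "AE x in \<mu>. x \<in> Y0"
proof (rule AE_I[of _ _ "UNIV - Y0"])
  have "emeasure \<mu> (UNIV - Y0) = emeasure \<mu> UNIV - emeasure \<mu> Y0"
    using Y0(1) by (intro emeasure_Diff) auto
  then show "emeasure \<mu> (UNIV - Y0) = 0"
    using Y0(2) measure_\<mu>_UNIV by (simp add: \<mu>.emeasure_eq_measure)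
qed (use Y0(1) in auto)

(* The sign sigma = 1 or -1 treats both signs of 2 p z - 1 at once. *)
lemma ball_mass_gap:
  assumes z: "z \<in> Y0" and h: "0 < h" and \<sigma>: "\<bar>\<sigma>\<bar> = 1"
    and gap: "4 * C * h powr \<beta> < \<sigma> * (2 * p z - 1)"
  shows "2 * C * h powr \<beta> * measure \<mu> (ball z h) \<le> \<sigma> * (measure PX (ball z h) - measure PY (ball z h))"
proof -
  let ?B = "ball z h"
  have "AE y in \<mu>. 2 * C * h powr \<beta> * indicator ?B y \<le> \<sigma> * ((2 * p y - 1) * indicator ?B y)"
    using AE_in_Y0
  proof eventually_elim
    case (elim y)
    show ?case
    proof (cases "y \<in> ?B")
      case True
      let ?d = "C * h powr \<beta>"
      have "C * dist y z powr \<beta> \<le> ?d"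
        using True C \<beta> by (intro mult_left_mono powr_mono2) (auto simp: dist_commute)
      then have "\<bar>\<sigma> * (p y - p z)\<bar> \<le> ?d"
        using holder[OF elim z] \<sigma> by (simp add: abs_mult)
      moreover have "\<sigma> * (2 * p y - 1) = \<sigma> * (2 * p z - 1) + 2 * (\<sigma> * (p y - p z))"
        by (simp add: algebra_simps)
      ultimately have "\<sigma> * (2 * p z - 1) - 2 * ?d \<le> \<sigma> * (2 * p y - 1)"
        unfolding abs_le_iff by linarith
      moreover have "4 * ?d < \<sigma> * (2 * p z - 1)"
        using gap by (simp add: mult.assoc)
      ultimately show ?thesis
        using True by (simp add: mult.assoc)
    qed simp
  qed
  then have "(\<integral>y. 2 * C * h powr \<beta> * indicator ?B y \<partial>\<mu>) \<le> (\<integral>y. \<sigma> * ((2 * p y - 1) * indicator ?B y) \<partial>\<mu>)"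
    using integrable_p by (intro integral_mono_AE integrable_mult_right integrable_real_mult_indicator) auto
  then show ?thesis
    using measure_PX_diff_PY[of ?B] by simp
qed

end

section \<open>Excess risk of the kernel classifier\<close>

definition prob_phi :: "real \<Rightarrow> nat \<Rightarrow> real \<Rightarrow> 'a::metric_space measure \<Rightarrow> 'a measure \<Rightarrow> 'a \<Rightarrow> real" where
  "prob_phi w n h PX PY z = measure (PiM {..<n} (\<lambda>_. sample_law w PX PY))
      {s \<in> space (PiM {..<n} (\<lambda>_. sample_law w PX PY)). phi n h s z}"

context
  fixes PX PY :: "'a::{metric_space, second_countable_topology} measure" and w :: real
  assumes PX: "prob_space PX" "sets PX = sets borel"
    and PY: "prob_space PY" "sets PY = sets borel"
    and w: "0 < w" "w < 1"
begin

interpretation S: prob_space "PiM {..<n} (\<lambda>_. sample_law w PX PY)" for n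
  using prob_space_sample_law[OF PX PY w] by (intro prob_space_PiM) auto

lemma prob_phi_nonneg: "0 \<le> prob_phi w n h PX PY z"
  and prob_phi_le_1: "prob_phi w n h PX PY z \<le> 1"
  by (simp_all add: prob_phi_def)

lemma measure_not_phi:
  "measure (PiM {..<n} (\<lambda>_. sample_law w PX PY)) {s \<in> space (PiM {..<n} (\<lambda>_. sample_law w PX PY)). \<not> phi n h s z}
    = 1 - prob_phi w n h PX PY z"
proof -
  have "Measurable.pred (PiM {..<n} (\<lambda>_. sample_law w PX PY)) (\<lambda>s. phi n h s z)"
    using measurable_compose[OF measurable_Pair2'[of z PX] measurable_phi[OF sets_sample_law[OF PX PY w] PX(2)]]
      sets_eq_imp_space_eq[OF PX(2)] by simp
  then have A: "{s \<in> space (PiM {..<n} (\<lambda>_. sample_law w PX PY)). phi n h s z} \<in> sets (PiM {..<n} (\<lambda>_. sample_law w PX PY))"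
    by (simp add: pred_def)
  have eq: "space (PiM {..<n} (\<lambda>_. sample_law w PX PY)) - {s \<in> space (PiM {..<n} (\<lambda>_. sample_law w PX PY)). phi n h s z}
      = {s \<in> space (PiM {..<n} (\<lambda>_. sample_law w PX PY)). \<not> phi n h s z}"
    by auto
  show ?thesis
    unfolding prob_phi_def by (simp only: eq[symmetric] S.prob_compl[OF A])
qed

lemma measure_phi_ne:
  "measure (PiM {..<n} (\<lambda>_. sample_law w PX PY)) {s \<in> space (PiM {..<n} (\<lambda>_. sample_law w PX PY)). phi n h s z \<noteq> b}
    = (if b then 1 - prob_phi w n h PX PY z else prob_phi w n h PX PY z)"
  by (cases b) (simp_all add: measure_not_phi prob_phi_def)

lemma excess_risk_eq_integral:
  fixes n :: nat and d \<gamma> :: real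
  defines "q \<equiv> prob_phi w n (bandwidth d \<gamma> n) PX PY"
  shows "excess_risk w d \<gamma> n PX PY = (\<integral>z. q z \<partial>PX) + (\<integral>z. 1 - q z \<partial>PY) - 1 + TV PX PY"
    and "q \<in> borel_measurable borel"
proof -
  let ?S = "PiM {..<n} (\<lambda>_. sample_law w PX PY)" and ?h = "bandwidth d \<gamma> n"
  have pred: "Measurable.pred (?S \<Otimes>\<^sub>M P) (\<lambda>x. phi n ?h (fst x) (snd x))" if "sets P = sets borel" for P
    using measurable_phi[OF sets_sample_law[OF PX PY w] that] .
  note fubini = measure_pair_measure_eq_integral[OF S.prob_space_axioms]
  have "q \<in> borel_measurable PX"
    using fubini(2)[OF PX(1) pred[OF PX(2)]] by (simp add: q_def prob_phi_def[abs_def])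
  then show "q \<in> borel_measurable borel"
    by (subst (asm) measurable_cong_sets[OF PX(2) refl])
  show "excess_risk w d \<gamma> n PX PY = (\<integral>z. q z \<partial>PX) + (\<integral>z. 1 - q z \<partial>PY) - 1 + TV PX PY"
    using fubini(1)[OF PX(1) pred[OF PX(2)]] fubini(1)[OF PY(1), of "\<lambda>s z. \<not> phi n ?h s z"] pred[OF PY(2)]
    by (simp add: excess_risk_def joint_law_def Let_def q_def prob_phi_def measure_not_phi
        case_prod_unfold)
qed

end


lemma prob_wrong_decision_le_heavy:
  fixes PX PY :: "'a::{metric_space, second_countable_topology} measure"
  assumes H: "holder_class_density PX PY p Y0 C \<beta>" and w: "0 < w" "w < 1" and n: "0 < n"
    and h: "0 < h" and C_pos: "0 < C" and \<tau>: "0 < \<tau>"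
    and z: "z \<in> Y0" and heavy: "\<tau> \<le> measure (sum_meas PX PY) (ball z h)"
    and far: "4 * C * h powr \<beta> < \<bar>2 * p z - 1\<bar>"
  shows "measure (PiM {..<n} (\<lambda>_. sample_law w PX PY))
      {s \<in> space (PiM {..<n} (\<lambda>_. sample_law w PX PY)). phi n h s z \<noteq> (2 * p z < 1)}
    \<le> 2 * deviation_bound (min w (1 - w)) n (C * h powr \<beta> * \<tau>)"
proof -
  interpret holder_class_density PX PY p Y0 C \<beta> by (rule H)
  let ?B = "ball z h" and ?\<sigma> = "sgn (2 * p z - 1)"
  define \<delta> where "\<delta> = 2 * C * h powr \<beta> * \<tau>"
  have "0 \<le> 4 * C * h powr \<beta>" and \<delta>: "0 < \<delta>"
    using C_pos h \<tau> by (simp_all add: \<delta>_def)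
  then have \<sigma>: "\<bar>?\<sigma>\<bar> = 1" "?\<sigma> * (2 * p z - 1) = \<bar>2 * p z - 1\<bar>"
    using far by (auto simp: sgn_if abs_if)
  have "\<delta> \<le> 2 * C * h powr \<beta> * measure \<mu> ?B"
    unfolding \<delta>_def using heavy C_pos by (intro mult_left_mono) auto
  also have "\<dots> \<le> ?\<sigma> * (measure PX ?B - measure PY ?B)"
    using ball_mass_gap[OF z h \<sigma>(1)] far \<sigma>(2) by simp
  finally have gap: "\<delta> \<le> ?\<sigma> * (measure PX ?B - measure PY ?B)" .
  then have "\<delta> \<le> \<bar>measure PX ?B - measure PY ?B\<bar>"
    using abs_ge_self[of "?\<sigma> * (measure PX ?B - measure PY ?B)"] \<sigma>(1) by (simp add: abs_mult)
  moreover have "measure PX ?B < measure PY ?B \<longleftrightarrow> 2 * p z < 1"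
    using gap \<delta> \<sigma>(1) by (auto simp: sgn_if split: if_splits)
  ultimately show ?thesis
    using prob_wrong_decision_le[OF PX PY w n h \<delta>, of z] by (simp add: \<delta>_def mult.assoc)
qed

lemma risk_density_le_heavy:
  fixes PX PY :: "'a::{metric_space, second_countable_topology} measure"
  assumes H: "holder_class_density PX PY p Y0 C \<beta>" and w: "0 < w" "w < 1" and n: "0 < n"
    and h: "0 < h" and C_pos: "0 < C" and \<tau>: "0 < \<tau>"
    and z: "z \<in> Y0" "z \<in> ball c (h / 2)" and heavy: "\<tau> \<le> measure (sum_meas PX PY) (ball c (h / 2))"
  shows "\<bar>2 * p z - 1\<bar> * (if 1 \<le> 2 * p z then prob_phi w n h PX PY z else 1 - prob_phi w n h PX PY z)
    \<le> 4 * C * h powr \<beta> + (2 * p z + 1) * (2 * deviation_bound (min w (1 - w)) n (C * h powr \<beta> * \<tau>))"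
proof -
  interpret holder_class_density PX PY p Y0 C \<beta> by (rule H)
  let ?err = "if 1 \<le> 2 * p z then prob_phi w n h PX PY z else 1 - prob_phi w n h PX PY z"
    and ?e = "2 * deviation_bound (min w (1 - w)) n (C * h powr \<beta> * \<tau>)"
  have err: "0 \<le> ?err" "?err \<le> 1"
    using prob_phi_nonneg[OF PX PY w] prob_phi_le_1[OF PX PY w] by auto
  have "0 \<le> ?e"
    by (simp add: deviation_bound_def)
  then have "0 \<le> (2 * p z + 1) * ?e"
    using p_nonneg[of z] by simp
  show ?thesis
  proof (cases "\<bar>2 * p z - 1\<bar> \<le> 4 * C * h powr \<beta>")
    case True
    then show ?thesis
      using err \<open>0 \<le> (2 * p z + 1) * ?e\<close> mult_left_le[OF err(2), of "\<bar>2 * p z - 1\<bar>"] by linarith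
  next
    case False
    have "ball c (h / 2) \<subseteq> ball z h"
      using z(2) unfolding subset_iff mem_ball by metric
    then have "\<tau> \<le> measure \<mu> (ball z h)"
      using heavy \<mu>.finite_measure_mono[of "ball c (h / 2)" "ball z h"] by simp
    from prob_wrong_decision_le_heavy[OF H w n h C_pos \<tau> z(1) this] False
    have "?err \<le> ?e"
      using measure_phi_ne[OF PX PY w] by (auto simp: not_le split: if_splits)
    then have "\<bar>2 * p z - 1\<bar> * ?err \<le> (2 * p z + 1) * ?e"
      using err p_nonneg[of z] by (intro mult_mono) auto
    moreover have "0 \<le> 4 * C * h powr \<beta>"
      using C_pos by simp
    ultimately show ?thesis
      by linarith
  qed
qed

definition light_balls :: "'a::metric_space measure \<Rightarrow> 'a set \<Rightarrow> real \<Rightarrow> real \<Rightarrow> 'a set" where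
  "light_balls M Cs r \<tau> = (\<Union>c\<in>{c \<in> Cs. measure M (ball c r) < \<tau>}. ball c r)"

lemma light_balls_borel: "light_balls M Cs r \<tau> \<in> sets borel"
  unfolding light_balls_def by (intro borel_open open_UN) auto

lemma measure_light_balls_le:
  assumes "finite Cs" "sets M = sets borel" "0 \<le> \<tau>"
  shows "measure M (light_balls M Cs r \<tau>) \<le> real (card Cs) * \<tau>"
proof -
  have "measure M (light_balls M Cs r \<tau>) \<le> (\<Sum>c\<in>{c \<in> Cs. measure M (ball c r) < \<tau>}. measure M (ball c r))"
    unfolding light_balls_def using assms by (intro measure_UNION_le) auto
  also have "\<dots> \<le> real (card {c \<in> Cs. measure M (ball c r) < \<tau>}) * \<tau>"
    using sum_bounded_above[of _ "\<lambda>c. measure M (ball c r)" \<tau>] by fastforce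
  also have "\<dots> \<le> real (card Cs) * \<tau>"
    using assms by (intro mult_right_mono) (auto intro: card_mono)
  finally show ?thesis .
qed

lemma risk_density_le_cover:
  fixes PX PY :: "'a::{metric_space, second_countable_topology} measure"
  assumes H: "holder_class_density PX PY p Y0 C \<beta>" and w: "0 < w" "w < 1" and n: "0 < n"
    and h: "0 < h" and C_pos: "0 < C" and \<tau>: "0 < \<tau>"
    and z: "z \<in> Y0" "z \<in> (\<Union>c\<in>Cs. ball c (h / 2))"
  shows "\<bar>2 * p z - 1\<bar> * (if 1 \<le> 2 * p z then prob_phi w n h PX PY z else 1 - prob_phi w n h PX PY z)
    \<le> indicator (light_balls (sum_meas PX PY) Cs (h / 2) \<tau>) z * (2 * p z + 1)
      + (4 * C * h powr \<beta> + (2 * p z + 1) * (2 * deviation_bound (min w (1 - w)) n (C * h powr \<beta> * \<tau>)))"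
proof -
  interpret holder_class_density PX PY p Y0 C \<beta> by (rule H)
  let ?err = "if 1 \<le> 2 * p z then prob_phi w n h PX PY z else 1 - prob_phi w n h PX PY z"
    and ?L = "light_balls \<mu> Cs (h / 2) \<tau>"
  have rest: "0 \<le> 4 * C * h powr \<beta> + (2 * p z + 1) * (2 * deviation_bound (min w (1 - w)) n (C * h powr \<beta> * \<tau>))"
    using C_pos p_nonneg[of z] by (simp add: deviation_bound_def)
  show ?thesis
  proof (cases "z \<in> ?L")
    case True
    then have "indicator ?L z * (2 * p z + 1) = 2 * p z + 1"
      by simp
    moreover have "\<bar>2 * p z - 1\<bar> * ?err \<le> 2 * p z + 1"
      using prob_phi_nonneg[OF PX PY w] prob_phi_le_1[OF PX PY w] by (intro abs_density_gap_mult_le) auto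
    ultimately show ?thesis
      using rest by linarith
  next
    case False
    from z(2) obtain c where c: "c \<in> Cs" "z \<in> ball c (h / 2)"
      by blast
    have "\<tau> \<le> measure \<mu> (ball c (h / 2))"
    proof (rule ccontr)
      assume "\<not> \<tau> \<le> measure \<mu> (ball c (h / 2))"
      then have "z \<in> ?L"
        using c unfolding light_balls_def by auto
      with False show False ..
    qed
    from risk_density_le_heavy[OF H w n h C_pos \<tau> z(1) c(2) this]
    show ?thesis
      using False by simp
  qed
qed

lemma excess_risk_le_cover:
  fixes PX PY :: "'a::{metric_space, second_countable_topology} measure"
  assumes H: "holder_class_density PX PY p Y0 C \<beta>" and w: "0 < w" "w < 1" and n: "0 < n"
    and h: "0 < bandwidth d \<gamma> n" and C_pos: "0 < C" and \<tau>: "0 < \<tau>"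
    and cover: "finite Cs" "Y0 \<subseteq> (\<Union>c\<in>Cs. ball c (bandwidth d \<gamma> n / 2))"
  shows "excess_risk w d \<gamma> n PX PY \<le> 3 * real (card Cs) * \<tau> + 8 * C * bandwidth d \<gamma> n powr \<beta>
      + 8 * deviation_bound (min w (1 - w)) n (C * bandwidth d \<gamma> n powr \<beta> * \<tau>)"
proof -
  interpret holder_class_density PX PY p Y0 C \<beta> by (rule H)
  define h where "h = bandwidth d \<gamma> n"
  define q where "q = prob_phi w n h PX PY"
  define e where "e = 2 * deviation_bound (min w (1 - w)) n (C * h powr \<beta> * \<tau>)"
  define U where "U = light_balls \<mu> Cs (h / 2) \<tau>"
  define G where "G z = indicator U z * (2 * p z + 1) + (2 * e * p z + (4 * C * h powr \<beta> + e))" for z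
  note q = excess_risk_eq_integral[OF PX PY w, where n = n and d = d and \<gamma> = \<gamma>, folded h_def, folded q_def]
  have q01: "0 \<le> q z" "q z \<le> 1" for z
    using prob_phi_nonneg[OF PX PY w] prob_phi_le_1[OF PX PY w] by (simp_all add: q_def)
  have U: "U \<in> sets borel"
    unfolding U_def by (rule light_balls_borel)
  have affine: "integrable \<mu> (\<lambda>z. 2 * e * p z + (4 * C * h powr \<beta> + e))"
    "(\<integral>z. 2 * e * p z + (4 * C * h powr \<beta> + e) \<partial>\<mu>) = 2 * e + 2 * (4 * C * h powr \<beta> + e)"
    using integrable_indicator_affine[of UNIV "2 * e" "4 * C * h powr \<beta> + e"]
      integral_indicator_affine[of UNIV "2 * e" "4 * C * h powr \<beta> + e"] measure_PX_UNIV measure_\<mu>_UNIV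
    by simp_all
  have "excess_risk w d \<gamma> n PX PY \<le> (\<integral>z. \<bar>2 * p z - 1\<bar> * (if 1 \<le> 2 * p z then q z else 1 - q z) \<partial>\<mu>)"
    using risk_le_integral[OF q(2) q01] q(1) by simp
  also have "\<dots> \<le> (\<integral>z. G z \<partial>\<mu>)"
  proof (rule integral_mono_AE[OF integrable_risk_density[OF q(2) q01]])
    show "integrable \<mu> G"
      unfolding G_def by (rule Bochner_Integration.integrable_add[OF integrable_indicator_affine[OF U] affine(1)])
    show "AE z in \<mu>. \<bar>2 * p z - 1\<bar> * (if 1 \<le> 2 * p z then q z else 1 - q z) \<le> G z"
      using AE_in_Y0
    proof eventually_elim
      case (elim z)
      have "z \<in> (\<Union>c\<in>Cs. ball c (h / 2))"
        using subsetD[OF cover(2) elim] by (simp add: h_def)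
      note risk_density_le_cover[OF H w n h[folded h_def] C_pos \<tau> elim this, folded e_def q_def U_def]
      moreover have "(2 * p z + 1) * e = 2 * e * p z + e"
        by (simp add: algebra_simps)
      ultimately show ?case
        unfolding G_def by linarith
    qed
  qed
  also have "(\<integral>z. G z \<partial>\<mu>) = 2 * measure PX U + measure \<mu> U + 2 * e + 2 * (4 * C * h powr \<beta> + e)"
    unfolding G_def using U affine
    by (subst Bochner_Integration.integral_add) (auto simp: integral_indicator_affine integrable_indicator_affine)
  also have "\<dots> \<le> 3 * (real (card Cs) * \<tau>) + 8 * C * h powr \<beta> + 4 * e"
  proof -
    have "2 * measure PX U + measure \<mu> U \<le> 3 * (real (card Cs) * \<tau>)"
      using measure_light_balls_le[OF cover(1) sets_\<mu>, of \<tau> "h / 2"] measure_\<mu>[OF U]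
        measure_nonneg[of PY U] \<tau> unfolding U_def by linarith
    then show ?thesis
      by (simp add: algebra_simps)
  qed
  finally show ?thesis
    by (simp add: h_def e_def mult.assoc)
qed

section \<open>Covering numbers and the rate\<close>

lemma covering_number_attained:
  assumes "finite C" "Y \<subseteq> (\<Union>c\<in>C. ball c s)"
  shows "\<exists>Cs. finite Cs \<and> Y \<subseteq> (\<Union>c\<in>Cs. ball c s) \<and> card Cs = covering_number s Y"
proof -
  have "covering_number s Y \<in> {card C | C. finite C \<and> Y \<subseteq> (\<Union>c\<in>C. ball c s)}"
    unfolding covering_number_def using assms by (intro Inf_nat_def1) auto
  then show ?thesis
    by auto
qed

(* Without a finite cover, covering_number is Inf {}, an unspecified natural number; the lower
   entropy bound, which blows up as s tends to 0, rules this out. *)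
lemma finite_cover_if_entropy_lower_bound:
  fixes Y :: "'a::metric_space set"
  assumes entropy: "\<And>s. 0 < s \<Longrightarrow> s < s0 \<Longrightarrow> c * s powr (-\<gamma>) \<le> ln (real (covering_number s Y))"
    and c: "0 < c" and \<gamma>: "0 < \<gamma>" and s: "0 < s" "s < s0"
  shows "\<exists>C. finite C \<and> Y \<subseteq> (\<Union>x\<in>C. ball x s)"
proof (rule ccontr)
  assume no_cover: "\<not> ?thesis"
  have same_number: "covering_number s' Y = covering_number s Y" if "0 < s'" "s' \<le> s" for s'
  proof -
    have no_card: "{card C | C. finite C \<and> Y \<subseteq> (\<Union>x\<in>C. ball x t)} = {}" if "t \<le> s" for t
    proof -
      have "\<not> (finite C \<and> Y \<subseteq> (\<Union>x\<in>C. ball x t))" for C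
      proof
        assume "finite C \<and> Y \<subseteq> (\<Union>x\<in>C. ball x t)"
        moreover have "(\<Union>x\<in>C. ball x t) \<subseteq> (\<Union>x\<in>C. ball x s)"
          using subset_ball[OF that] by auto
        ultimately show False
          using no_cover by blast
      qed
      then show ?thesis
        by auto
    qed
    show ?thesis
      unfolding covering_number_def no_card[OF that(2)] no_card[OF order_refl] ..
  qed
  define V where "V = ln (real (covering_number s Y))"
  have "0 < c * s powr (-\<gamma>)"
    using c s by simp
  then have V: "0 < V"
    using entropy[OF s] by (simp add: V_def)
  define s' where "s' = min s ((c / (2 * V)) powr (1 / \<gamma>))"
  have s': "0 < s'" "s' \<le> s"
    using s c V by (auto simp: s'_def)
  have "2 * V / c = ((c / (2 * V)) powr (1 / \<gamma>)) powr (-\<gamma>)"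
    using c V \<gamma> by (simp add: powr_powr powr_minus_divide)
  also have "\<dots> \<le> s' powr (-\<gamma>)"
    using s' \<gamma> by (intro powr_mono2') (auto simp: s'_def)
  finally have "2 * V \<le> c * s' powr (-\<gamma>)"
    using c by (simp add: field_simps)
  also have "\<dots> \<le> V"
    using entropy[of s'] s' s same_number[OF s'] by (simp add: V_def)
  finally show False
    using V by simp
qed

lemma
  fixes d \<gamma> :: real and n :: nat
  assumes "0 < d * ln n" "0 < \<gamma>"
  shows bandwidth_pos: "0 < bandwidth d \<gamma> n"
    and bandwidth_half_powr: "(bandwidth d \<gamma> n / 2) powr (-\<gamma>) = 2 powr \<gamma> * (d * ln n)"
proof -
  show "0 < bandwidth d \<gamma> n"
    using assms by (auto simp: bandwidth_def)
  then show "(bandwidth d \<gamma> n / 2) powr (-\<gamma>) = 2 powr \<gamma> * (d * ln n)"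
    using assms by (simp add: powr_divide powr_minus_divide powr_powr powr_mult bandwidth_def flip: abs_mult)
qed

lemma bandwidth_cover:
  fixes Y :: "'a::metric_space set"
  assumes entropy: "\<And>s. 0 < s \<Longrightarrow> s < s0 \<Longrightarrow>
        cx0 * s powr (-\<gamma>) \<le> ln (real (covering_number s Y)) \<and>
        ln (real (covering_number s Y)) \<le> cx1 * s powr (-\<gamma>)"
    and cx0: "0 < cx0" and \<gamma>: "0 < \<gamma>" and d: "0 < d" and n: "1 < n"
    and h_small: "bandwidth d \<gamma> n / 2 < s0"
  obtains Cs where "finite Cs" "Y \<subseteq> (\<Union>c\<in>Cs. ball c (bandwidth d \<gamma> n / 2))"
    "real (card Cs) \<le> real n powr (cx1 * 2 powr \<gamma> * d)"
proof -
  define h where "h = bandwidth d \<gamma> n"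
  have dn: "0 < d * ln n"
    using d n by simp
  have h: "0 < h / 2" "h / 2 < s0"
    using bandwidth_pos[OF dn \<gamma>] h_small by (simp_all add: h_def)
  have "\<exists>C. finite C \<and> Y \<subseteq> (\<Union>x\<in>C. ball x (h / 2))"
    by (rule finite_cover_if_entropy_lower_bound[OF _ cx0 \<gamma> h]) (simp add: entropy)
  then obtain Cs where Cs: "finite Cs" "Y \<subseteq> (\<Union>c\<in>Cs. ball c (h / 2))" "card Cs = covering_number (h / 2) Y"
    using covering_number_attained by metis
  have "0 < cx0 * (h / 2) powr (-\<gamma>)"
    using cx0 h by simp
  then have "0 < ln (real (card Cs))"
    using entropy[OF h, THEN conjunct1] unfolding Cs(3) by linarith
  then have "real (card Cs) = exp (ln (real (card Cs)))"
    by (cases "card Cs = 0") simp_all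
  also have "\<dots> \<le> exp (cx1 * (2 powr \<gamma> * (d * ln n)))"
    using entropy[OF h] Cs(3) bandwidth_half_powr[OF dn \<gamma>] by (simp add: h_def)
  also have "\<dots> = real n powr (cx1 * 2 powr \<gamma> * d)"
    using n by (simp add: powr_def mult_ac)
  finally show ?thesis
    using that Cs(1,2) by (simp add: h_def)
qed

lemma excess_risk_le_rate:
  fixes Y :: "'a::polish_space set"
  assumes entropy: "\<And>s. 0 < s \<Longrightarrow> s < s0 \<Longrightarrow>
        cx0 * s powr (-\<gamma>) \<le> ln (real (covering_number s Y)) \<and>
        ln (real (covering_number s Y)) \<le> cx1 * s powr (-\<gamma>)"
    and cx0: "0 < cx0" and \<gamma>: "0 < \<gamma>" and C: "0 < C" and \<beta>: "0 < \<beta>" and w: "0 < w" "w < 1"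
    and d: "0 < d" and n: "1 < n" and h_small: "bandwidth d \<gamma> n / 2 < s0"
    and pair: "(PX, PY) \<in> model_class Y C \<beta> \<kappa>"
  shows "excess_risk w d \<gamma> n PX PY \<le> 3 * real n powr (cx1 * 2 powr \<gamma> * d) * real n powr (-\<theta>)
      + 8 * C * bandwidth d \<gamma> n powr \<beta>
      + 8 * deviation_bound (min w (1 - w)) n (C * bandwidth d \<gamma> n powr \<beta> * real n powr (-\<theta>))"
proof -
  obtain Y0 p where PX: "prob_space PX" "sets PX = sets borel" and PY: "prob_space PY" "sets PY = sets borel"
    and Y0: "Y0 \<in> sets borel" "Y0 \<subseteq> Y" "emeasure (sum_meas PX PY) Y0 = 2"
    and p: "p \<in> borel_measurable borel" "\<And>x. 0 \<le> p x" "density (sum_meas PX PY) (\<lambda>x. ennreal (p x)) = PX"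
    and holder: "\<forall>y\<in>Y0. \<forall>z\<in>Y0. \<bar>p y - p z\<bar> \<le> C * dist y z powr \<beta>"
    using pair unfolding model_class_def by blast
  have H: "holder_class_density PX PY p Y0 C \<beta>"
    using PX PY Y0(1,3) p holder C \<beta>
    by (simp add: holder_class_density_def holder_class_density_axioms_def class_density_def)
  obtain Cs where Cs: "finite Cs" "Y \<subseteq> (\<Union>c\<in>Cs. ball c (bandwidth d \<gamma> n / 2))"
    "real (card Cs) \<le> real n powr (cx1 * 2 powr \<gamma> * d)"
    using bandwidth_cover[OF entropy cx0 \<gamma> d n h_small] by blast
  have "0 < n" "0 < bandwidth d \<gamma> n" "0 < real n powr (-\<theta>)"
    using n d \<gamma> by (auto intro: bandwidth_pos)
  from excess_risk_le_cover[OF H w this(1,2) C this(3) Cs(1)] Y0(2) Cs(2)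
  have "excess_risk w d \<gamma> n PX PY \<le> 3 * real (card Cs) * real n powr (-\<theta>) + 8 * C * bandwidth d \<gamma> n powr \<beta>
      + 8 * deviation_bound (min w (1 - w)) n (C * bandwidth d \<gamma> n powr \<beta> * real n powr (-\<theta>))"
    by blast
  moreover have "3 * real (card Cs) * real n powr (-\<theta>) \<le> 3 * real n powr (cx1 * 2 powr \<gamma> * d) * real n powr (-\<theta>)"
    using Cs(3) by (intro mult_right_mono) auto
  ultimately show ?thesis
    by linarith
qed

lemma bandwidth_exponent_lt_half:
  fixes cx1 \<gamma> \<eta> d :: real
  assumes "0 < cx1" "0 < \<gamma>" "0 \<le> \<eta>" "\<eta> < 1 / 2" "d < \<eta> * inverse cx1 * 4 powr (-\<gamma>)"
  shows "cx1 * 2 powr \<gamma> * d < 1 / 2"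
proof -
  have "2 powr \<gamma> * (cx1 * d) < 2 powr \<gamma> * (\<eta> * 4 powr (-\<gamma>))"
    using assms by (simp add: field_simps)
  also have "\<dots> = \<eta> * 2 powr (-\<gamma>)"
    by (simp add: powr_minus field_simps flip: powr_mult)
  also have "\<dots> \<le> \<eta> * 1"
    using assms powr_mono[of "-\<gamma>" 0 2] by (intro mult_left_mono) auto
  finally show ?thesis
    using assms by (simp add: mult_ac)
qed

theorem theorem3:
  fixes Y :: "'a::polish_space set"
    and s0 cx0 cx1 \<gamma> C \<beta> \<kappa> w \<eta> d :: real
  assumes Y_borel: "Y \<in> sets borel"
    and s0: "s0 > 0" and c0: "0 < cx0" and c01: "cx0 < cx1" and gamma: "\<gamma> > 0"
    and entropy: "\<And>s. 0 < s \<Longrightarrow> s < s0 \<Longrightarrow>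
        cx0 * s powr (-\<gamma>) \<le> ln (real (covering_number s Y)) \<and>
        ln (real (covering_number s Y)) \<le> cx1 * s powr (-\<gamma>)"
    and C: "C > 0" and beta: "0 < \<beta>" "\<beta> \<le> 1" and kappa: "\<kappa> > 0"
    and w: "0 < w" "w < 1"
    and eta: "0 < \<eta>" "\<eta> < 1/2"
    and d: "0 < d" "d < \<eta> * inverse cx1 * 4 powr (-\<gamma>)"
  shows "\<exists>c. \<forall>\<^sub>F n in sequentially.
           \<forall>(PX, PY) \<in> model_class Y C \<beta> \<kappa>.
             excess_risk w d \<gamma> n PX PY \<le> c * ln (real n) powr (-\<beta> / \<gamma>)"
proof -
  (* Since alpha < theta < 1/2, the light-ball term n^(alpha - theta) vanishes while the
     Hoeffding exponent grows like n^(1 - 2 theta). *)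
  define \<alpha> where "\<alpha> = cx1 * 2 powr \<gamma> * d"
  define \<theta> where "\<theta> = (\<alpha> + 1 / 2) / 2"
  have "0 < \<alpha>" "\<alpha> < 1 / 2"
    using bandwidth_exponent_lt_half[of cx1 \<gamma> \<eta> d] c0 c01 gamma eta d by (simp_all add: \<alpha>_def)
  then have \<alpha>: "0 < \<alpha>" "\<alpha> < \<theta>" "\<theta> < 1 / 2"
    by (simp_all add: \<theta>_def)
  define B where "B n = 3 * real n powr \<alpha> * real n powr (-\<theta>) + 8 * C * bandwidth d \<gamma> n powr \<beta>
      + 8 * deviation_bound (min w (1 - w)) n (C * bandwidth d \<gamma> n powr \<beta> * real n powr (-\<theta>))" for n
  have bound: "excess_risk w d \<gamma> n PX PY \<le> \<bar>B n\<bar>"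
    if "1 < n" "bandwidth d \<gamma> n / 2 < s0" "(PX, PY) \<in> model_class Y C \<beta> \<kappa>" for n PX PY
    using excess_risk_le_rate[OF entropy c0 gamma C beta(1) w d(1) that, where \<theta> = \<theta>]
    by (simp add: B_def \<alpha>_def)
  have "B \<in> O(\<lambda>n. ln (real n) powr (-\<beta> / \<gamma>))"
    using \<alpha> C w d(1) gamma beta(1) unfolding B_def bandwidth_def deviation_bound_def by real_asymp
  then obtain c where "\<forall>\<^sub>F n in sequentially. \<bar>B n\<bar> \<le> c * ln (real n) powr (-\<beta> / \<gamma>)"
    by (elim landau_o.bigE) auto
  moreover have "\<forall>\<^sub>F n in sequentially. 1 < n"
    by (rule eventually_gt_at_top)
  moreover have "\<forall>\<^sub>F n in sequentially. bandwidth d \<gamma> n / 2 < s0"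
    using d(1) gamma s0 unfolding bandwidth_def by real_asymp
  ultimately have "\<forall>\<^sub>F n in sequentially. \<forall>(PX, PY) \<in> model_class Y C \<beta> \<kappa>.
      excess_risk w d \<gamma> n PX PY \<le> c * ln (real n) powr (-\<beta> / \<gamma>)"
  proof eventually_elim
    case (elim n)
    show ?case
    proof safe
      fix PX PY assume "(PX, PY) \<in> model_class Y C \<beta> \<kappa>"
      with elim bound[of n PX PY] show "excess_risk w d \<gamma> n PX PY \<le> c * ln (real n) powr (-\<beta> / \<gamma>)"
        by linarith
    qed
  qed
  then show ?thesis ..
qed

end
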